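(* Let $0,1,\dots,9$ be ten distinct points of $\mathbb{P}^3(\mathbb{C})$. Then either the ten points lie on a common quadric surface, or the points can be relabeled so that the three lines $01$, $23$, $45$ are mutually skew.
   Context: A quadric surface is the zero locus in $\mathbb{P}^3$ of a nonzero homogeneous polynomial of degree 2 in four variables; $ij$ denotes the line through the points $i$ and $j$; lines are skew if they do not meet. *)

theory Defs
  imports "HOL-Analysis.Analysis"
begin

text \<open>Points of P^3(C) are represented by nonzero vectors in C^4 (homogeneous coordinates).\<close>

definition same_proj_point :: "complex^4 \<Rightarrow> complex^4 \<Rightarrow> bool" where
  "same_proj_point u v \<longleftrightarrow> (\<exists>c::complex. c \<noteq> 0 \<and> u = c *s v)"

definition quad_eval :: "(4 \<Rightarrow> 4 \<Rightarrow> complex) \<Rightarrow> complex^4 \<Rightarrow> complex" where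
  "quad_eval c x = (\<Sum>(i,j)\<in>{(i,j). i \<le> j}. c i j * x$i * x$j)"

definition nonzero_quad :: "(4 \<Rightarrow> 4 \<Rightarrow> complex) \<Rightarrow> bool" where
  "nonzero_quad c \<longleftrightarrow> (\<exists>i j. i \<le> j \<and> c i j \<noteq> 0)"

definition on_quadric :: "(4 \<Rightarrow> 4 \<Rightarrow> complex) \<Rightarrow> complex^4 \<Rightarrow> bool" where
  "on_quadric c x \<longleftrightarrow> quad_eval c x = 0"

definition on_line :: "complex^4 \<Rightarrow> complex^4 \<Rightarrow> complex^4 \<Rightarrow> bool" where
  "on_line a b w \<longleftrightarrow> (\<exists>s t::complex. w = s *s a + t *s b)"

definition lines_meet :: "complex^4 \<Rightarrow> complex^4 \<Rightarrow> complex^4 \<Rightarrow> complex^4 \<Rightarrow> bool" where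
  "lines_meet a b c d \<longleftrightarrow> (\<exists>w. w \<noteq> 0 \<and> on_line a b w \<and> on_line c d w)"

definition skew_lines :: "complex^4 \<Rightarrow> complex^4 \<Rightarrow> complex^4 \<Rightarrow> complex^4 \<Rightarrow> bool" where
  "skew_lines a b c d \<longleftrightarrow> \<not> lines_meet a b c d"

end

theory Submission
  imports Defs
begin

text \<open>Suppose no six of the points form three mutually skew lines. If the points are not all
  on a line, fix a plane H through three of them. Should four independent points lie off H, take
  them as the coordinate frame: then H has no vanishing coordinate, and the Pluecker coordinates
  of the lines joining the three points of H force each such line into its own coordinate plane,
  which exhibits three skew lines. Hence the points off H lie in a plane H', and all points lie
  on the quadric H \<union> H'.\<close>

section \<open>Determinants of four points\<close>

lemma det_4:
  "det (A::'a::comm_ring_1^4^4) =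
     A$1$1*A$2$2*A$3$3*A$4$4 - A$1$1*A$2$2*A$3$4*A$4$3 - A$1$1*A$2$3*A$3$2*A$4$4
   + A$1$1*A$2$3*A$3$4*A$4$2 + A$1$1*A$2$4*A$3$2*A$4$3 - A$1$1*A$2$4*A$3$3*A$4$2
   - A$1$2*A$2$1*A$3$3*A$4$4 + A$1$2*A$2$1*A$3$4*A$4$3 + A$1$2*A$2$3*A$3$1*A$4$4
   - A$1$2*A$2$3*A$3$4*A$4$1 - A$1$2*A$2$4*A$3$1*A$4$3 + A$1$2*A$2$4*A$3$3*A$4$1
   + A$1$3*A$2$1*A$3$2*A$4$4 - A$1$3*A$2$1*A$3$4*A$4$2 - A$1$3*A$2$2*A$3$1*A$4$4
   + A$1$3*A$2$2*A$3$4*A$4$1 + A$1$3*A$2$4*A$3$1*A$4$2 - A$1$3*A$2$4*A$3$2*A$4$1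
   - A$1$4*A$2$1*A$3$2*A$4$3 + A$1$4*A$2$1*A$3$3*A$4$2 + A$1$4*A$2$2*A$3$1*A$4$3
   - A$1$4*A$2$2*A$3$3*A$4$1 - A$1$4*A$2$3*A$3$1*A$4$2 + A$1$4*A$2$3*A$3$2*A$4$1"
proof -
  have f1: "finite {2::4, 3, 4}" "1 \<notin> {2::4, 3, 4}" by auto
  have f2: "finite {3::4, 4}" "2 \<notin> {3::4, 4}" by auto
  have f3: "finite {4::4}" "3 \<notin> {4::4}" by auto
  show ?thesis
    unfolding det_def UNIV_4 sum_over_permutations_insert[OF f1] sum_over_permutations_insert[OF f2]
      sum_over_permutations_insert[OF f3] permutes_sing
    by (simp add: sign_swap_id permutation_swap_id sign_compose permutation_compose swap_id_eq
        algebra_simps)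
qed

definition rows4 :: "'a^4 \<Rightarrow> 'a^4 \<Rightarrow> 'a^4 \<Rightarrow> 'a^4 \<Rightarrow> 'a^4^4" where
  "rows4 a b c d = (\<chi> i. if i = 1 then a else if i = 2 then b else if i = 3 then c else d)"

lemma rows4_nth [simp]:
  "rows4 a b c d $ 1 = a" "rows4 a b c d $ 2 = b" "rows4 a b c d $ 3 = c" "rows4 a b c d $ 4 = d"
  by (simp_all add: rows4_def)

definition det4 :: "complex^4 \<Rightarrow> complex^4 \<Rightarrow> complex^4 \<Rightarrow> complex^4 \<Rightarrow> complex" where
  "det4 a b c d = det (rows4 a b c d)"

lemma det4_expand: "det4 a b c d =
     a$1*b$2*c$3*d$4 - a$1*b$2*c$4*d$3 - a$1*b$3*c$2*d$4
   + a$1*b$3*c$4*d$2 + a$1*b$4*c$2*d$3 - a$1*b$4*c$3*d$2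
   - a$2*b$1*c$3*d$4 + a$2*b$1*c$4*d$3 + a$2*b$3*c$1*d$4
   - a$2*b$3*c$4*d$1 - a$2*b$4*c$1*d$3 + a$2*b$4*c$3*d$1
   + a$3*b$1*c$2*d$4 - a$3*b$1*c$4*d$2 - a$3*b$2*c$1*d$4
   + a$3*b$2*c$4*d$1 + a$3*b$4*c$1*d$2 - a$3*b$4*c$2*d$1
   - a$4*b$1*c$2*d$3 + a$4*b$1*c$3*d$2 + a$4*b$2*c$1*d$3
   - a$4*b$2*c$3*d$1 - a$4*b$3*c$1*d$2 + a$4*b$3*c$2*d$1"
  unfolding det4_def det_4 by simp

abbreviation e :: "4 \<Rightarrow> complex^4" where "e i \<equiv> axis i 1"

lemma axis_one_nth: "axis i (1::complex) $ j = (if j = i then 1 else 0)"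
  by (simp add: axis_def)

lemma det4_swap_12: "det4 a b c d = - det4 b a c d"
  and det4_swap_23: "det4 a b c d = - det4 a c b d"
  and det4_swap_34: "det4 a b c d = - det4 a b d c"
  and det4_swap_pairs: "det4 a b c d = det4 c d a b"
  by (simp_all add: det4_expand algebra_simps)

lemma det4_repeat [simp]:
  "det4 a a c d = 0" "det4 a b a d = 0" "det4 a b c a = 0"
  "det4 a b b d = 0" "det4 a b c b = 0" "det4 a b c c = 0"
  by (simp_all add: det4_expand algebra_simps)

lemma det4_linear_1: "det4 (s *s a + t *s b) c d f = s * det4 a c d f + t * det4 b c d f"
  and det4_linear_2: "det4 c (s *s a + t *s b) d f = s * det4 c a d f + t * det4 c b d f"
  by (simp_all add: det4_expand field_simps)

section \<open>Lines, planes and quadrics\<close>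

lemma skew_lines_of_det4:
  assumes "det4 a b c d \<noteq> 0" shows "skew_lines a b c d"
  unfolding skew_lines_def lines_meet_def on_line_def
proof
  assume "\<exists>w. w \<noteq> 0 \<and> (\<exists>s t. w = s *s a + t *s b) \<and> (\<exists>s t. w = s *s c + t *s d)"
  then obtain w s t u v where w: "w \<noteq> 0" "w = s *s a + t *s b" "w = u *s c + v *s d" by blast
  have "s * det4 a b c d = det4 w b c d" using w(2) by (simp add: det4_linear_1)
  also have "\<dots> = 0" using w(3) by (simp add: det4_linear_1 det4_swap_12[of d b c d])
  finally have "s = 0" using assms by simp
  have "t * det4 a b c d = det4 a w c d" using w(2) by (simp add: det4_linear_2)
  also have "\<dots> = 0" using w(3) by (simp add: det4_linear_2)
  finally have "t = 0" using assms by simp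
  with \<open>s = 0\<close> w show False by simp
qed

text \<open>A plane is represented by the coefficient vector of its linear form.\<close>
definition pairing :: "complex^4 \<Rightarrow> complex^4 \<Rightarrow> complex" where
  "pairing l x = l$1*x$1 + l$2*x$2 + l$3*x$3 + l$4*x$4"

definition plane_through :: "complex^4 \<Rightarrow> complex^4 \<Rightarrow> complex^4 \<Rightarrow> complex^4" where
  "plane_through a b c = (\<chi> k. det4 a b c (e k))"

lemma pairing_plane_through: "pairing (plane_through a b c) x = det4 a b c x"
  unfolding pairing_def plane_through_def det4_expand by (simp add: axis_one_nth algebra_simps)

lemma plane_through_nonzero: "det4 a b c x \<noteq> 0 \<Longrightarrow> plane_through a b c \<noteq> 0"
  using pairing_plane_through[of a b c x] by (auto simp: pairing_def)

definition prod_quad :: "complex^4 \<Rightarrow> complex^4 \<Rightarrow> 4 \<Rightarrow> 4 \<Rightarrow> complex" where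
  "prod_quad l1 l2 i j = (if i = j then l1$i*l2$i else l1$i*l2$j + l1$j*l2$i)"

lemma le_4_pairs: "{(i,j). i \<le> (j::4)} = {(4,4),(4,1),(4,2),(4,3),(1,1),(1,2),(1,3),(2,2),(2,3),(3,3)}"
proof -
  have "i \<le> j \<longleftrightarrow> (i,j) \<in> {(4,4),(4,1),(4,2),(4,3),(1,1),(1,2),(1,3),(2,2),(2,3),(3,3)}" for i j :: 4
    using exhaust_4[of i] exhaust_4[of j]
    by (elim disjE; simp add: less_eq_bit0_def bit0.Rep_numeral bit0.Rep_1 bit0.Rep_0)
  then show ?thesis by auto
qed

lemma quad_eval_prod_quad: "quad_eval (prod_quad l1 l2) x = pairing l1 x * pairing l2 x"
  unfolding quad_eval_def le_4_pairs by (simp add: prod_quad_def pairing_def algebra_simps)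

lemma nonzero_quad_prod_quad:
  assumes "l1 \<noteq> 0" "l2 \<noteq> 0" shows "nonzero_quad (prod_quad l1 l2)"
proof -
  obtain i where i: "l1$i \<noteq> 0" using assms(1) by (metis vec_eq_iff zero_index)
  obtain j where j: "l2$j \<noteq> 0" using assms(2) by (metis vec_eq_iff zero_index)
  show ?thesis
  proof (cases "l2$i = 0")
    case False
    then show ?thesis unfolding nonzero_quad_def prod_quad_def using i by (intro exI[of _ i]) auto
  next
    case True
    then have "prod_quad l1 l2 (min i j) (max i j) \<noteq> 0"
      using i j by (cases "i \<le> j") (auto simp: prod_quad_def min_def max_def)
    then show ?thesis unfolding nonzero_quad_def by (metis max.cobounded1 min.cobounded1 order_trans)
  qed
qed

lemma quadric_of_two_planes:
  assumes "l1 \<noteq> 0" "l2 \<noteq> 0" "\<forall>x\<in>S. pairing l1 x = 0 \<or> pairing l2 x = 0"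
  shows "\<exists>c. nonzero_quad c \<and> (\<forall>x\<in>S. on_quadric c x)"
  using assms nonzero_quad_prod_quad[OF assms(1,2)]
  by (intro exI[of _ "prod_quad l1 l2"]) (auto simp: on_quadric_def quad_eval_prod_quad)

section \<open>Pluecker coordinates\<close>

definition plucker :: "complex^4 \<Rightarrow> complex^4 \<Rightarrow> 4 \<Rightarrow> 4 \<Rightarrow> complex" where
  "plucker u v i j = u$i * v$j - u$j * v$i"

lemma plucker_antisym: "plucker u v i j = - plucker u v j i"
  and plucker_swap: "plucker u v i j = - plucker v u i j"
  by (simp_all add: plucker_def)

lemma det4_laplace: "det4 u v w x =
     plucker u v 1 2 * plucker w x 3 4 - plucker u v 1 3 * plucker w x 2 4
   + plucker u v 1 4 * plucker w x 2 3 + plucker u v 2 3 * plucker w x 1 4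
   - plucker u v 2 4 * plucker w x 1 3 + plucker u v 3 4 * plucker w x 1 2"
  unfolding det4_expand plucker_def by algebra

lemma plucker_nonzero_of_det4:
  assumes "det4 u v w x \<noteq> 0" obtains a b where "plucker u v a b \<noteq> 0"
  using assms unfolding det4_laplace by fastforce

lemma UNIV_4_distinct: "distinct [a,b,c,d::4] \<Longrightarrow> UNIV = {a,b,c,d}"
  using distinct_card[of "[a,b,c,d]"] by (intro card_subset_eq[symmetric]) auto

lemma sum_UNIV_4_distinct:
  "distinct [a,b,c,d::4] \<Longrightarrow> (\<Sum>x\<in>UNIV. f x) = f a + f b + f c + f d"
  by (subst UNIV_4_distinct) (auto simp: add.assoc)

lemma extend_distinct_4:
  assumes "i \<noteq> (j::4)" obtains k m where "distinct [i,j,k,m]"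
proof -
  have "card (UNIV - {i,j}) = 2" using assms by (simp add: card_Diff_subset)
  then obtain k m where km: "k \<noteq> m" "UNIV - {i,j} = {k,m}" by (meson card_2_iff)
  then have "k \<notin> {i,j}" "m \<notin> {i,j}" by blast+
  then show ?thesis using that[of k m] km(1) assms by auto
qed

lemma extend_distinct_3_4:
  assumes "distinct [i,j,k::4]" obtains m where "distinct [i,j,k,m]"
proof -
  have "card (UNIV - {i,j,k}) = 1" using assms by (simp add: card_Diff_subset)
  then obtain m where "UNIV - {i,j,k} = {m}" by (meson card_1_singletonE)
  then have "m \<notin> {i,j,k}" by blast
  then show ?thesis using that[of m] assms by auto
qed

lemma distinct_4_cases:
  assumes "distinct [i,j,k,m::4]"
  shows "(i,j,k,m) \<in> {(1,2,3,4),(1,2,4,3),(1,3,2,4),(1,3,4,2),(1,4,2,3),(1,4,3,2),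
    (2,1,3,4),(2,1,4,3),(2,3,1,4),(2,3,4,1),(2,4,1,3),(2,4,3,1),
    (3,1,2,4),(3,1,4,2),(3,2,1,4),(3,2,4,1),(3,4,1,2),(3,4,2,1),
    (4,1,2,3),(4,1,3,2),(4,2,1,3),(4,2,3,1),(4,3,1,2),(4,3,2,1)}"
  using assms exhaust_4[of i] exhaust_4[of j] exhaust_4[of k] exhaust_4[of m]
  by (elim disjE; simp)

lemma det4_axes_nonzero: "distinct [i,j,k,m] \<Longrightarrow> det4 (e i) (e j) (e k) (e m) \<noteq> 0"
  by (drule distinct_4_cases) (elim insertE emptyE; simp add: det4_expand axis_one_nth)

lemma det4_axes_eq_0_iff:
  "distinct [i,j,k,m] \<Longrightarrow> det4 (e i) (e j) u v = 0 \<longleftrightarrow> plucker u v k m = 0"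
  by (drule distinct_4_cases) (elim insertE emptyE; simp add: det4_expand axis_one_nth plucker_def; metis)

text \<open>P will be the Pluecker matrix of a line in the plane with coordinates L; the conclusion
  then says that the line lies in exactly one coordinate plane.\<close>
context
  fixes P :: "4 \<Rightarrow> 4 \<Rightarrow> complex" and L :: "4 \<Rightarrow> complex"
  assumes antisym: "\<And>a b. P a b = - P b a"
    and L_nonzero: "\<And>a. L a \<noteq> 0"
    and column_relation: "\<And>b. (\<Sum>a\<in>UNIV. L a * P a b) = 0"
    and complementary: "\<And>a b c d. distinct [a,b,c,d] \<Longrightarrow> P a b = 0 \<or> P c d = 0"
begin

private lemma diag_zero: "P x x = 0"
  using antisym[of x x] by simp

private lemma column_partner:
  assumes "distinct [a,b,c,d]" "P a b \<noteq> 0"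
  shows "P c b \<noteq> 0 \<or> P d b \<noteq> 0"
proof -
  have "L a * P a b + L b * P b b + L c * P c b + L d * P d b = 0"
    using column_relation[of b] sum_UNIV_4_distinct[OF assms(1), of "\<lambda>x. L x * P x b"] by simp
  then show ?thesis using assms(2) L_nonzero[of a] diag_zero by auto
qed

private lemma support_of_row_pair:
  assumes ds: "distinct [a,b,c,d]" and ab: "P a b \<noteq> 0" and ac: "P a c \<noteq> 0"
  shows "(\<forall>x. P x d = 0) \<and> (\<forall>x y. x \<noteq> d \<longrightarrow> y \<noteq> d \<longrightarrow> x \<noteq> y \<longrightarrow> P x y \<noteq> 0)"
proof -
  have cd: "P c d = 0" using complementary[OF ds] ab by auto
  have bd: "P b d = 0" using complementary[of a c b d] ds ac by auto
  have cb: "P c b \<noteq> 0" using column_partner[OF ds ab] bd antisym[of d b] by auto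
  have ad: "P a d = 0" using complementary[of b c a d] ds cb antisym[of b c] by auto
  have UNIV: "x \<in> {a,b,c,d}" for x using UNIV_4_distinct[OF ds] by blast
  show ?thesis
  proof (intro conjI allI impI)
    show "P x d = 0" for x using UNIV[of x] ad bd cd diag_zero by auto
    show "P x y \<noteq> 0" if "x \<noteq> d" "y \<noteq> d" "x \<noteq> y" for x y
      using that UNIV[of x] UNIV[of y] ab ac cb antisym[of a b] antisym[of a c] antisym[of c b]
      by auto
  qed
qed

lemma antisym_support_avoids_index:
  assumes "P a b \<noteq> 0"
  shows "\<exists>d. (\<forall>x. P x d = 0) \<and> (\<forall>x y. x \<noteq> d \<longrightarrow> y \<noteq> d \<longrightarrow> x \<noteq> y \<longrightarrow> P x y \<noteq> 0)"
proof -
  have "a \<noteq> b" using assms diag_zero by auto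
  then obtain c d where ds: "distinct [b,a,c,d]" by (metis extend_distinct_4)
  have "P b a \<noteq> 0" using assms antisym[of a b] by auto
  then have "P c a \<noteq> 0 \<or> P d a \<noteq> 0" using column_partner[OF ds] by blast
  then have "P a c \<noteq> 0 \<or> P a d \<noteq> 0" using antisym[of c a] antisym[of d a] by auto
  then show ?thesis
    using support_of_row_pair[of a b c d] support_of_row_pair[of a b d c] ds assms by auto
qed

end

section \<open>Skew triples\<close>

text \<open>Lines ab, cd, fg that are mutually skew in the strong sense that any two of them span
  the whole space.\<close>
definition skew_triple ::
    "complex^4 \<Rightarrow> complex^4 \<Rightarrow> complex^4 \<Rightarrow> complex^4 \<Rightarrow> complex^4 \<Rightarrow> complex^4 \<Rightarrow> bool" where
  "skew_triple a b c d f g \<longleftrightarrow> det4 a b c d \<noteq> 0 \<and> det4 a b f g \<noteq> 0 \<and> det4 c d f g \<noteq> 0"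

definition has_skew_triple :: "(complex^4) set \<Rightarrow> bool" where
  "has_skew_triple X \<longleftrightarrow> (\<exists>a\<in>X. \<exists>b\<in>X. \<exists>c\<in>X. \<exists>d\<in>X. \<exists>f\<in>X. \<exists>g\<in>X. skew_triple a b c d f g)"

lemma has_skew_tripleI: "skew_triple a b c d f g \<Longrightarrow> {a,b,c,d,f,g} \<subseteq> X \<Longrightarrow> has_skew_triple X"
  unfolding has_skew_triple_def by (simp (no_asm_use)) blast

lemma has_skew_triple_mono: "X \<subseteq> Y \<Longrightarrow> has_skew_triple X \<Longrightarrow> has_skew_triple Y"
  unfolding has_skew_triple_def by blast

lemma sum_plane_coeffs_plucker:
  "(\<Sum>a\<in>UNIV. det4 p q r (e a) * plucker u v a b) = det4 p q r u * v$b - det4 p q r v * u$b"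
  unfolding UNIV_4 by (simp add: det4_expand axis_one_nth plucker_def) algebra

lemma plucker_column_zero_imp_coords_zero:
  assumes column: "\<forall>x. plucker u v x d = 0" and nonzero: "plucker u v a b \<noteq> 0"
  shows "u$d = 0 \<and> v$d = 0"
proof -
  have "u$d = 0"
  proof (rule ccontr)
    assume "u$d \<noteq> 0"
    then have "v$x = v$d / u$d * u$x" for x
      using column[rule_format, of x] by (simp add: plucker_def field_simps)
    from this[of a] this[of b] show False using nonzero by (simp add: plucker_def)
  qed
  moreover have "v$d = 0"
  proof (rule ccontr)
    assume "v$d \<noteq> 0"
    then have "u$x = 0" for x using column[rule_format, of x] \<open>u$d = 0\<close> by (simp add: plucker_def)
    then show False using nonzero by (simp add: plucker_def)
  qed
  ultimately show ?thesis ..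
qed

text \<open>Lines e a e b and e c e d through complementary coordinate points are skew, so without
  a skew triple every line uv meets one of them; the plane pqr having no zero coordinate then
  confines uv to a coordinate plane.\<close>
lemma frame_line_in_coordinate_plane:
  assumes plane: "\<And>t. det4 p q r (e t) \<noteq> 0"
    and no_skew: "\<not> has_skew_triple ({p,q,r} \<union> range e)"
    and uv: "u \<in> {p,q,r}" "v \<in> {p,q,r}" and nonzero: "plucker u v a b \<noteq> 0"
  shows "\<exists>d. u$d = 0 \<and> v$d = 0 \<and> (\<forall>x y. x \<noteq> d \<longrightarrow> y \<noteq> d \<longrightarrow> x \<noteq> y \<longrightarrow> plucker u v x y \<noteq> 0)"
proof -
  have "plucker u v a b = 0 \<or> plucker u v c d = 0" if ds: "distinct [a,b,c,d]" for a b c d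
  proof -
    have "{e c, e d, e a, e b, u, v} \<subseteq> {p,q,r} \<union> range e" using uv by blast
    then have "\<not> skew_triple (e c) (e d) (e a) (e b) u v" using no_skew has_skew_tripleI by metis
    moreover have "det4 (e c) (e d) (e a) (e b) \<noteq> 0" using ds by (intro det4_axes_nonzero) auto
    ultimately have "det4 (e c) (e d) u v = 0 \<or> det4 (e a) (e b) u v = 0"
      unfolding skew_triple_def by blast
    moreover have "distinct [c,d,a,b]" using ds by auto
    ultimately show ?thesis using det4_axes_eq_0_iff[OF ds] det4_axes_eq_0_iff by blast
  qed
  moreover have "(\<Sum>a\<in>UNIV. det4 p q r (e a) * plucker u v a b) = 0" for b
    using uv by (auto simp: sum_plane_coeffs_plucker)
  ultimately obtain d where d: "\<forall>x. plucker u v x d = 0"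
    "\<forall>x y. x \<noteq> d \<longrightarrow> y \<noteq> d \<longrightarrow> x \<noteq> y \<longrightarrow> plucker u v x y \<noteq> 0"
    using antisym_support_avoids_index[of "plucker u v" "\<lambda>t. det4 p q r (e t)", OF plucker_antisym
        plane, OF _ _ nonzero] by blast
  then show ?thesis using plucker_column_zero_imp_coords_zero[OF d(1) nonzero] by blast
qed

lemma det4_axes_interleaved_eq_0_iff:
  "distinct [i,j,k,m] \<Longrightarrow> det4 (e i) u (e j) v = 0 \<longleftrightarrow> plucker u v k m = 0"
  using det4_axes_eq_0_iff det4_swap_23[of "e i" u "e j" v] by simp

lemma det4_common_zero_coord:
  assumes "p$d = 0" "q$d = 0" "r$d = 0" "a \<noteq> d" shows "det4 p q r (e a) = 0"
  using assms exhaust_4[of a] exhaust_4[of d] by (elim disjE; simp add: det4_expand axis_one_nth)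

text \<open>The lines pq, pr, qr lie in distinct coordinate planes x d1 = 0, x d2 = 0, x d3 = 0;
  joining q, r, p to the coordinate points e d3, e d2, e d1 gives the skew triple.\<close>
lemma has_skew_triple_standard_frame:
  assumes plane: "\<And>t. det4 p q r (e t) \<noteq> 0"
  shows "has_skew_triple ({p,q,r} \<union> range e)"
proof (rule ccontr)
  assume no_skew: "\<not> ?thesis"
  have "det4 p q r (e 1) \<noteq> 0" "det4 p r q (e 1) \<noteq> 0" "det4 q r p (e 1) \<noteq> 0"
    using plane[of 1] det4_swap_23[of p q r] det4_swap_23[of q p r] det4_swap_12[of q p r] by auto
  then obtain a1 b1 a2 b2 a3 b3 where
    pq: "plucker p q a1 b1 \<noteq> 0" and pr: "plucker p r a2 b2 \<noteq> 0" and qr: "plucker q r a3 b3 \<noteq> 0"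
    by (metis plucker_nonzero_of_det4)
  have mem: "p \<in> {p,q,r}" "q \<in> {p,q,r}" "r \<in> {p,q,r}" by simp_all
  obtain d1 where
    d1: "p$d1 = 0" "q$d1 = 0" "\<forall>x y. x \<noteq> d1 \<longrightarrow> y \<noteq> d1 \<longrightarrow> x \<noteq> y \<longrightarrow> plucker p q x y \<noteq> 0"
    using frame_line_in_coordinate_plane[OF plane no_skew mem(1,2) pq] by blast
  obtain d2 where
    d2: "p$d2 = 0" "r$d2 = 0" "\<forall>x y. x \<noteq> d2 \<longrightarrow> y \<noteq> d2 \<longrightarrow> x \<noteq> y \<longrightarrow> plucker p r x y \<noteq> 0"
    using frame_line_in_coordinate_plane[OF plane no_skew mem(1,3) pr] by blast
  obtain d3 where
    d3: "q$d3 = 0" "r$d3 = 0" "\<forall>x y. x \<noteq> d3 \<longrightarrow> y \<noteq> d3 \<longrightarrow> x \<noteq> y \<longrightarrow> plucker q r x y \<noteq> 0"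
    using frame_line_in_coordinate_plane[OF plane no_skew mem(2,3) qr] by blast
  have no_common_zero: False if "p$d = 0" "q$d = 0" "r$d = 0" for d
    using det4_common_zero_coord[OF that, of "d + 1"] plane by simp
  have neq: "d1 \<noteq> d2" "d1 \<noteq> d3" "d2 \<noteq> d3" using d1 d2 d3 no_common_zero by metis+
  then obtain d0 where ds: "distinct [d1,d2,d3,d0]"
    by (metis extend_distinct_3_4 distinct_length_2_or_more distinct_singleton)
  have "plucker q r d1 d0 \<noteq> 0" "plucker q p d2 d0 \<noteq> 0" "plucker r p d3 d0 \<noteq> 0"
    using d1(3) d2(3) d3(3) ds plucker_swap[of q p] plucker_swap[of r p] by auto
  then have "skew_triple (e d3) q (e d2) r (e d1) p"
    unfolding skew_triple_def using ds det4_axes_interleaved_eq_0_iff[of d3 d2 d1 d0]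
      det4_axes_interleaved_eq_0_iff[of d3 d1 d2 d0] det4_axes_interleaved_eq_0_iff[of d2 d1 d3 d0]
    by auto
  moreover have "{e d3, q, e d2, r, e d1, p} \<subseteq> {p,q,r} \<union> range e" by auto
  ultimately show False using no_skew has_skew_tripleI by metis
qed

lemma rows4_matrix_vector_mult:
  "rows4 ((M::'a::comm_ring_1^4^4) *v a) (M *v b) (M *v c) (M *v d) = rows4 a b c d ** transpose M"
  unfolding vec_eq_iff
  by (auto simp: matrix_matrix_mult_def matrix_vector_mult_def transpose_def rows4_def mult.commute
      intro!: sum.cong)

lemma det4_matrix_vector_mult: "det4 (M *v a) (M *v b) (M *v c) (M *v d) = det M * det4 a b c d"
  unfolding det4_def rows4_matrix_vector_mult det_mul det_transpose by simp

lemma has_skew_triple_of_image: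
  assumes "det M \<noteq> 0" "has_skew_triple ((*v) M ` X)" shows "has_skew_triple X"
  using assms unfolding has_skew_triple_def skew_triple_def by (simp add: det4_matrix_vector_mult)

lemma transpose_rows4_axis:
  "transpose (rows4 x1 x2 x3 x4) *v e 1 = x1" "transpose (rows4 x1 x2 x3 x4) *v e 2 = x2"
  "transpose (rows4 x1 x2 x3 x4) *v e 3 = x3" "transpose (rows4 x1 x2 x3 x4) *v e 4 = x4"
  by (simp_all add: vec_eq_iff matrix_vector_mult_def transpose_def axis_def mult_if_delta
      sum.delta' if_distrib cong: if_cong)

text \<open>Taking x1, ..., x4 as the coordinate frame reduces this to the standard frame.\<close>
lemma has_skew_triple_frame_off_plane:
  assumes frame: "det4 x1 x2 x3 x4 \<noteq> 0"
    and off_plane: "\<forall>x\<in>{x1,x2,x3,x4}. det4 p q r x \<noteq> 0"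
  shows "has_skew_triple {p,q,r,x1,x2,x3,x4}"
proof -
  define B where "B = transpose (rows4 x1 x2 x3 x4)"
  have "det B \<noteq> 0" using frame by (simp add: B_def det4_def)
  then obtain C where "C ** B = mat 1" by (metis invertible_det_nz invertible_def)
  then have C_B: "C *v (B *v y) = y" for y by (simp add: matrix_vector_mul_assoc)
  have "det C * det B = 1" using det_mul[of C B] \<open>C ** B = mat 1\<close> by simp
  then have det_C: "det C \<noteq> 0" by auto
  have "C *v x1 = e 1" "C *v x2 = e 2" "C *v x3 = e 3" "C *v x4 = e 4"
    using C_B[of "e 1"] C_B[of "e 2"] C_B[of "e 3"] C_B[of "e 4"]
    unfolding B_def transpose_rows4_axis by simp_all
  then have C_frame: "(*v) C ` {x1,x2,x3,x4} = range e" unfolding UNIV_4 by auto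
  have "det4 (C *v p) (C *v q) (C *v r) (e t) \<noteq> 0" for t
  proof -
    have "e t \<in> (*v) C ` {x1,x2,x3,x4}" unfolding C_frame by simp
    then obtain x where "x \<in> {x1,x2,x3,x4}" "e t = C *v x" by blast
    then show ?thesis using off_plane det_C det4_matrix_vector_mult[of C p q r x] by auto
  qed
  then have "has_skew_triple ({C *v p, C *v q, C *v r} \<union> (*v) C ` {x1,x2,x3,x4})"
    unfolding C_frame by (rule has_skew_triple_standard_frame)
  moreover have "(*v) C ` {p,q,r,x1,x2,x3,x4} = {C *v p, C *v q, C *v r} \<union> (*v) C ` {x1,x2,x3,x4}"
    by auto
  ultimately show ?thesis using has_skew_triple_of_image[OF det_C] by metis
qed

section \<open>Covering the points by two planes\<close>

definition spans_line :: "complex^4 \<Rightarrow> complex^4 \<Rightarrow> bool" where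
  "spans_line a b \<longleftrightarrow> (\<exists>k m. det4 a b (e k) (e m) \<noteq> 0)"

lemma spans_line_of_not_same_proj_point:
  assumes "a \<noteq> 0" "b \<noteq> 0" "\<not> same_proj_point b a"
  shows "spans_line a b"
proof (rule ccontr)
  assume "\<not> spans_line a b"
  then have det_zero: "det4 a b (e k) (e m) = 0" for k m by (simp add: spans_line_def)
  obtain i where i: "a$i \<noteq> 0" using assms(1) by (metis vec_eq_iff zero_index)
  have "plucker a b i j = 0" for j
  proof (cases "j = i")
    case False
    then obtain k m where "distinct [i,j,k,m]" by (metis extend_distinct_4)
    then have "distinct [k,m,i,j]" by auto
    then show ?thesis
      using det4_axes_eq_0_iff det_zero det4_swap_pairs[of "e k" "e m" a b] by metis
  qed (simp add: plucker_def)
  then have "b = (b$i / a$i) *s a" using i by (simp add: vec_eq_iff plucker_def field_simps)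
  moreover have "b$i / a$i \<noteq> 0" using calculation assms(2) by (metis vector_smult_lzero)
  ultimately show False using assms(3) unfolding same_proj_point_def by blast
qed

lemma plane_containing_line:
  assumes "spans_line a b"
  obtains l where "l \<noteq> 0" "\<And>x. (\<forall>y. det4 a b x y = 0) \<Longrightarrow> pairing l x = 0"
proof -
  obtain k m where "det4 a b (e k) (e m) \<noteq> 0" using assms by (auto simp: spans_line_def)
  then show ?thesis
    using that[of "plane_through a b (e k)"] plane_through_nonzero
    by (simp add: pairing_plane_through det4_swap_34[of a b "e k"])
qed

lemma frame_off_plane_degenerate:
  assumes no_skew: "\<not> has_skew_triple S" and "{p,q,r,a,b,c,d} \<subseteq> S"
    and "\<forall>x\<in>{a,b,c,d}. det4 p q r x \<noteq> 0"
  shows "det4 a b c d = 0"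
  using assms has_skew_triple_frame_off_plane has_skew_triple_mono by metis

lemma off_plane_points_coplanar:
  assumes lines: "\<forall>a\<in>S. \<forall>b\<in>S. a \<noteq> b \<longrightarrow> spans_line a b"
    and no_skew: "\<not> has_skew_triple S"
    and pqr: "p \<in> S" "q \<in> S" "r \<in> S" and plane: "det4 p q r y \<noteq> 0"
  obtains l where "l \<noteq> 0" "\<And>x. x \<in> S \<Longrightarrow> det4 p q r x \<noteq> 0 \<Longrightarrow> pairing l x = 0"
proof -
  define T where "T = {x\<in>S. det4 p q r x \<noteq> 0}"
  consider (plane) a b c y' where "a \<in> T" "b \<in> T" "c \<in> T" "det4 a b c y' \<noteq> 0"
    | (collinear) "\<And>a b c y'. a \<in> T \<Longrightarrow> b \<in> T \<Longrightarrow> c \<in> T \<Longrightarrow> det4 a b c y' = 0"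
    by blast
  then show ?thesis
  proof cases
    case plane
    have "det4 a b c d = 0" if "d \<in> T" for d
      using pqr plane that by (intro frame_off_plane_degenerate[OF no_skew, of p q r]) (auto simp: T_def)
    then show ?thesis
      using that[of "plane_through a b c"] plane_through_nonzero[OF plane(4)]
      by (auto simp: pairing_plane_through T_def)
  next
    case collinear
    show ?thesis
    proof (cases "T = {}")
      case True
      then show ?thesis using that[OF plane_through_nonzero[OF plane]] by (auto simp: T_def)
    next
      case False
      then obtain a where a: "a \<in> T" by blast
      obtain b where "b \<in> S" "b \<noteq> a" "\<And>x y. x \<in> T \<Longrightarrow> det4 a b x y = 0"
      proof (cases "T = {a}")
        case True
        moreover have "p \<notin> T" by (simp add: T_def)
        ultimately show ?thesis using that[of p] pqr a by auto
      next
        case False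
        then obtain b where "b \<in> T" "b \<noteq> a" using a by blast
        then show ?thesis using that[of b] a collinear by (auto simp: T_def)
      qed
      moreover have "a \<in> S" using a by (simp add: T_def)
      ultimately obtain l where "l \<noteq> 0" "\<And>x. (\<forall>y. det4 a b x y = 0) \<Longrightarrow> pairing l x = 0"
        using lines plane_containing_line by metis
      then show ?thesis using that[of l] \<open>\<And>x y. x \<in> T \<Longrightarrow> det4 a b x y = 0\<close>
        by (auto simp: T_def)
    qed
  qed
qed

lemma two_planes_cover_of_no_skew_triple:
  assumes lines: "\<forall>a\<in>S. \<forall>b\<in>S. a \<noteq> b \<longrightarrow> spans_line a b"
    and no_skew: "\<not> has_skew_triple S"
    and two_points: "a \<in> S" "b \<in> S" "a \<noteq> b"
  obtains l1 l2 where "l1 \<noteq> 0" "l2 \<noteq> 0" "\<forall>x\<in>S. pairing l1 x = 0 \<or> pairing l2 x = 0"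
proof (cases "\<exists>p\<in>S. \<exists>q\<in>S. \<exists>r\<in>S. \<exists>y. det4 p q r y \<noteq> 0")
  case True
  then obtain p q r y where pqr: "p \<in> S" "q \<in> S" "r \<in> S" and plane: "det4 p q r y \<noteq> 0" by blast
  obtain l where "l \<noteq> 0" "\<And>x. x \<in> S \<Longrightarrow> det4 p q r x \<noteq> 0 \<Longrightarrow> pairing l x = 0"
    using off_plane_points_coplanar[OF lines no_skew pqr plane] by blast
  then show ?thesis
    using that[OF plane_through_nonzero[OF plane]] by (metis pairing_plane_through)
next
  case False
  obtain l where "l \<noteq> 0" "\<And>x. (\<forall>y. det4 a b x y = 0) \<Longrightarrow> pairing l x = 0"
    using lines two_points plane_containing_line by metis
  then show ?thesis using that[of l l] False two_points by blast
qed

lemma extend_to_permutation: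
  assumes "distinct xs" "set xs \<subseteq> {..<n::nat}"
  obtains \<sigma> where "bij_betw \<sigma> {..<n} {..<n}" "\<And>i. i < length xs \<Longrightarrow> \<sigma> i = xs ! i"
proof -
  let ?k = "length xs"
  have "card {?k..<n} = card ({..<n} - set xs)"
    using assms distinct_card[OF assms(1)] by (simp add: card_Diff_subset)
  then have "\<exists>h. bij_betw h {?k..<n} ({..<n} - set xs)" by (simp add: bij_betw_iff_card)
  then obtain h where h: "bij_betw h {?k..<n} ({..<n} - set xs)" ..
  define \<sigma> where "\<sigma> i = (if i < ?k then xs ! i else h i)" for i
  have "bij_betw ((!) xs) {..<?k} (set xs)" by (rule bij_betw_nth[OF assms(1)]) simp_all
  then have "bij_betw \<sigma> {..<?k} (set xs)" by (rule bij_betw_cong[THEN iffD1, rotated]) (simp add: \<sigma>_def)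
  moreover have "bij_betw \<sigma> {?k..<n} ({..<n} - set xs)"
    using h by (rule bij_betw_cong[THEN iffD1, rotated]) (simp add: \<sigma>_def)
  ultimately have "bij_betw \<sigma> ({..<?k} \<union> {?k..<n}) (set xs \<union> ({..<n} - set xs))"
    by (rule bij_betw_combine) auto
  moreover have "{..<?k} \<union> {?k..<n} = {..<n}"
    using assms distinct_card[OF assms(1)] card_mono[OF _ assms(2)] by auto
  moreover have "set xs \<union> ({..<n} - set xs) = {..<n}" using assms(2) by auto
  ultimately show ?thesis using that[of \<sigma>] by (simp add: \<sigma>_def)
qed

lemma skew_relabeling_of_has_skew_triple:
  fixes p :: "nat \<Rightarrow> complex^4"
  assumes "has_skew_triple (p ` {..<n})"
  shows "\<exists>\<sigma>. bij_betw \<sigma> {..<n} {..<n} \<and>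
           skew_lines (p (\<sigma> 0)) (p (\<sigma> 1)) (p (\<sigma> 2)) (p (\<sigma> 3)) \<and>
           skew_lines (p (\<sigma> 0)) (p (\<sigma> 1)) (p (\<sigma> 4)) (p (\<sigma> 5)) \<and>
           skew_lines (p (\<sigma> 2)) (p (\<sigma> 3)) (p (\<sigma> 4)) (p (\<sigma> 5))"
proof -
  obtain i0 i1 i2 i3 i4 i5 where "i0 < n" "i1 < n" "i2 < n" "i3 < n" "i4 < n" "i5 < n"
    and skew: "skew_triple (p i0) (p i1) (p i2) (p i3) (p i4) (p i5)"
    using assms unfolding has_skew_triple_def by (auto simp: image_iff)
  then have idx: "set [i0,i1,i2,i3,i4,i5] \<subseteq> {..<n}" by simp
  have "distinct [i0,i1,i2,i3,i4,i5]" using skew unfolding skew_triple_def by auto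
  then obtain \<sigma> where \<sigma>: "bij_betw \<sigma> {..<n} {..<n}"
    "\<And>i. i < length [i0,i1,i2,i3,i4,i5] \<Longrightarrow> \<sigma> i = [i0,i1,i2,i3,i4,i5] ! i"
    using extend_to_permutation[OF _ idx] by blast
  have "\<sigma> 0 = i0" "\<sigma> 1 = i1" "\<sigma> 2 = i2" "\<sigma> 3 = i3" "\<sigma> 4 = i4" "\<sigma> 5 = i5"
    using \<sigma>(2)[of 0] \<sigma>(2)[of 1] \<sigma>(2)[of 2] \<sigma>(2)[of 3] \<sigma>(2)[of 4] \<sigma>(2)[of 5] by simp_all
  then show ?thesis using \<sigma>(1) skew skew_lines_of_det4 unfolding skew_triple_def by metis
qed

theorem mainTheorem12:
  fixes p :: "nat \<Rightarrow> complex^4"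
  assumes nz: "\<And>i. i < 10 \<Longrightarrow> p i \<noteq> 0"
    and dist: "\<And>i j. i < 10 \<Longrightarrow> j < 10 \<Longrightarrow> i \<noteq> j \<Longrightarrow> \<not> same_proj_point (p i) (p j)"
  shows "(\<exists>c. nonzero_quad c \<and> (\<forall>i<10. on_quadric c (p i)))
       \<or> (\<exists>\<sigma>. bij_betw \<sigma> {..<10::nat} {..<10} \<and>
            skew_lines (p (\<sigma> 0)) (p (\<sigma> 1)) (p (\<sigma> 2)) (p (\<sigma> 3)) \<and>
            skew_lines (p (\<sigma> 0)) (p (\<sigma> 1)) (p (\<sigma> 4)) (p (\<sigma> 5)) \<and>
            skew_lines (p (\<sigma> 2)) (p (\<sigma> 3)) (p (\<sigma> 4)) (p (\<sigma> 5)))"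
proof (cases "has_skew_triple (p ` {..<10})")
  case True
  then show ?thesis using skew_relabeling_of_has_skew_triple by blast
next
  case False
  have lines: "\<forall>a\<in>p ` {..<10}. \<forall>b\<in>p ` {..<10}. a \<noteq> b \<longrightarrow> spans_line a b"
    using nz dist spans_line_of_not_same_proj_point by blast
  have "\<not> same_proj_point (p 1) (p 0)" using dist[of 1 0] by simp
  then have "p 0 \<noteq> p 1" unfolding same_proj_point_def by (metis one_neq_zero vector_smult_lid)
  then obtain l1 l2 where "l1 \<noteq> 0" "l2 \<noteq> 0" "\<forall>x\<in>p ` {..<10}. pairing l1 x = 0 \<or> pairing l2 x = 0"
    using two_planes_cover_of_no_skew_triple[OF lines False, of "p 0" "p 1"] by auto
  then show ?thesis using quadric_of_two_planes[of l1 l2 "p ` {..<10}"] by auto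
qed

end
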